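(* Let $0<m<M$, let $A,B\in\mathbb{P}_n^+$ satisfy $mI\le A\le MI$ and $mI\le B\le MI$, and let $f:[0,\infty)\to[0,\infty)$ be a differentiable convex function with $f(0)=0$. Suppose that either (i) $\lambda_j(B)<\lambda_n(A)$ for all $j=1,\dots,n$, or (ii) $\lambda_1(A)<\lambda_j(B)$ for all $j=1,\dots,n$. Then $$(\det(f(A)+f(B)))^{1/n}\le 2^{1-\frac1n}\,\frac{f(M)}{M}\big((\det A)^{1/n}+(\det B)^{1/n}\big).$$
   Context: $\mathbb{P}_n^+$ denotes the set of $n\times n$ complex positive definite matrices, $I$ is the identity matrix, $\le$ is the Löwner order, and $f(A)$ is defined by functional calculus. For a Hermitian matrix $X$, $\lambda_1(X)\ge\dots\ge\lambda_n(X)$ are its eigenvalues in decreasing order. *)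

theory Defs
  imports "HOL-Analysis.Analysis" "Jordan_Normal_Form.Matrix" "Jordan_Normal_Form.Determinant"
    "Jordan_Normal_Form.Char_Poly"
begin

definition ctrans :: "complex mat \<Rightarrow> complex mat" where
  "ctrans A = mat (dim_col A) (dim_row A) (\<lambda>(i,j). cnj (A $$ (j,i)))"

definition hermitian :: "nat \<Rightarrow> complex mat \<Rightarrow> bool" where
  "hermitian n A \<longleftrightarrow> A \<in> carrier_mat n n \<and> ctrans A = A"

definition qform :: "complex mat \<Rightarrow> complex vec \<Rightarrow> complex" where
  "qform A x = (\<Sum>i<dim_vec x. cnj (x $ i) * (A *\<^sub>v x) $ i)"

definition psd :: "nat \<Rightarrow> complex mat \<Rightarrow> bool" where
  "psd n A \<longleftrightarrow> hermitian n A \<and> (\<forall>x \<in> carrier_vec n. 0 \<le> Re (qform A x))"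

definition posdef :: "nat \<Rightarrow> complex mat \<Rightarrow> bool" where
  "posdef n A \<longleftrightarrow> hermitian n A \<and>
     (\<forall>x \<in> carrier_vec n. x \<noteq> 0\<^sub>v n \<longrightarrow> 0 < Re (qform A x))"

definition loewner_le :: "nat \<Rightarrow> complex mat \<Rightarrow> complex mat \<Rightarrow> bool" where
  "loewner_le n A B \<longleftrightarrow> hermitian n A \<and> hermitian n B \<and> psd n (B - A)"

definition unitary :: "nat \<Rightarrow> complex mat \<Rightarrow> bool" where
  "unitary n U \<longleftrightarrow> U \<in> carrier_mat n n \<and> U * ctrans U = 1\<^sub>m n"

definition diag_of :: "nat \<Rightarrow> (nat \<Rightarrow> complex) \<Rightarrow> complex mat" where
  "diag_of n d = mat n n (\<lambda>(i,j). if i = j then d i else 0)"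

definition mat_fun :: "nat \<Rightarrow> (real \<Rightarrow> real) \<Rightarrow> complex mat \<Rightarrow> complex mat" where
  "mat_fun n f A = (SOME B. \<exists>U d. unitary n U \<and> (\<forall>i<n. d i \<in> \<real>) \<and>
       A = U * diag_of n d * ctrans U \<and>
       B = U * diag_of n (\<lambda>i. complex_of_real (f (Re (d i)))) * ctrans U)"

text \<open>Largest and smallest eigenvalues (lambda_1 and lambda_n) of a Hermitian matrix.\<close>
definition lambda_max :: "complex mat \<Rightarrow> real" where
  "lambda_max A = Max {Re k | k. eigenvalue A k}"

definition lambda_min :: "complex mat \<Rightarrow> real" where
  "lambda_min A = Min {Re k | k. eigenvalue A k}"

end

theory Submission
  imports Defs "Jordan_Normal_Form.Schur_Decomposition" "Jordan_Normal_Form.Spectral_Radius"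
begin

text \<open>
  Convexity with \<open>f 0 = 0\<close> and \<open>f \<ge> 0\<close> gives \<open>0 \<le> f t \<le> (f M / M) t\<close> on \<open>[0, M]\<close>, hence
  \<open>0 \<le> f(A) + f(B) \<le> (f M / M)(A + B)\<close> in the Loewner order, and since the determinant is
  monotone on positive semidefinite matrices, \<open>det (f(A) + f(B)) \<le> (f M / M)^n det (A + B)\<close>.
  The separation of the spectra makes \<open>A\<close> and \<open>B\<close> comparable, say \<open>B \<le> A\<close>. Diagonalizing both
  by one congruence, \<open>A = T T\<^sup>*\<close> and \<open>B = T diag(t) T\<^sup>*\<close> with \<open>0 \<le> t\<^sub>i \<le> 1\<close>, and using
  \<open>(1 + p)(1 + x) \<le> 2 (1 + p x)\<close> for \<open>p, x \<in> [0, 1]\<close> yields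
  \<open>det (A + B) = |det T|\<^sup>2 \<Prod>(1 + t\<^sub>i) \<le> 2^(n-1) (det A + det B)\<close>.
  Taking \<open>n\<close>-th roots, which are subadditive, gives the claim.
\<close>

section \<open>Conjugate transpose and Hermitian matrices\<close>

lemma dim_ctrans[simp]: "dim_row (ctrans A) = dim_col A" "dim_col (ctrans A) = dim_row A"
  unfolding ctrans_def by auto

lemma ctrans_carrier[simp]: "A \<in> carrier_mat n m \<Longrightarrow> ctrans A \<in> carrier_mat m n"
  unfolding ctrans_def by auto

lemma index_ctrans[simp]:
  "i < dim_col A \<Longrightarrow> j < dim_row A \<Longrightarrow> ctrans A $$ (i,j) = cnj (A $$ (j,i))"
  unfolding ctrans_def by auto

lemma ctrans_ctrans[simp]: "ctrans (ctrans A) = A"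
  by (rule eq_matI) auto

lemma ctrans_one[simp]: "ctrans (1\<^sub>m n) = 1\<^sub>m n"
  by (rule eq_matI) auto

lemma ctrans_mult:
  assumes "A \<in> carrier_mat n k" "B \<in> carrier_mat k m"
  shows "ctrans (A * B) = ctrans B * ctrans A"
proof (rule eq_matI)
  fix i j assume "i < dim_row (ctrans B * ctrans A)" "j < dim_col (ctrans B * ctrans A)"
  then have i: "i < m" and j: "j < n" using assms by auto
  have "ctrans (A * B) $$ (i,j) = cnj (\<Sum>l<k. A $$ (j,l) * B $$ (l,i))"
    using assms i j by (simp add: scalar_prod_def atLeast0LessThan)
  also have "\<dots> = (\<Sum>l<k. cnj (B $$ (l,i)) * cnj (A $$ (j,l)))"
    by (simp add: cnj_sum mult.commute)
  also have "\<dots> = (ctrans B * ctrans A) $$ (i,j)"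
    using assms i j by (simp add: scalar_prod_def atLeast0LessThan)
  finally show "ctrans (A * B) $$ (i,j) = (ctrans B * ctrans A) $$ (i,j)" .
qed (use assms in auto)

lemma ctrans_add:
  "A \<in> carrier_mat n m \<Longrightarrow> B \<in> carrier_mat n m \<Longrightarrow> ctrans (A + B) = ctrans A + ctrans B"
  by (intro eq_matI) auto

lemma ctrans_minus:
  "A \<in> carrier_mat n m \<Longrightarrow> B \<in> carrier_mat n m \<Longrightarrow> ctrans (A - B) = ctrans A - ctrans B"
  by (intro eq_matI) auto

lemma ctrans_smult_real: "ctrans (complex_of_real r \<cdot>\<^sub>m A) = complex_of_real r \<cdot>\<^sub>m ctrans A"
  by (intro eq_matI) auto

lemma det_ctrans:
  assumes "A \<in> carrier_mat n n"
  shows "det (ctrans A) = cnj (det A)"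
proof -
  have "ctrans A = map_mat cnj (transpose_mat A)"
    using assms by (intro eq_matI) auto
  moreover have "det (map_mat cnj (transpose_mat A)) = cnj (det (transpose_mat A))"
    unfolding det_def by (simp add: cnj_sum cnj_prod sign_def)
  ultimately show ?thesis using det_transpose[OF assms] by simp
qed

lemma hermitian_carrier: "hermitian n A \<Longrightarrow> A \<in> carrier_mat n n"
  unfolding hermitian_def by simp

lemma hermitian_add: "hermitian n A \<Longrightarrow> hermitian n B \<Longrightarrow> hermitian n (A + B)"
  unfolding hermitian_def using ctrans_add[of A n n B] by auto

lemma hermitian_minus: "hermitian n A \<Longrightarrow> hermitian n B \<Longrightarrow> hermitian n (A - B)"
  unfolding hermitian_def using ctrans_minus[of A n n B] by auto

lemma hermitian_smult_real: "hermitian n A \<Longrightarrow> hermitian n (complex_of_real r \<cdot>\<^sub>m A)"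
  unfolding hermitian_def by (simp add: ctrans_smult_real)

lemma mult_ctrans_assoc:
  assumes "X \<in> carrier_mat n k" "P \<in> carrier_mat k k"
  shows "X * P * ctrans X = X * (P * ctrans X)"
  using assms by (simp add: assoc_mult_mat[of X n k P k "ctrans X" n])

lemma hermitian_congruence:
  assumes P: "hermitian k P" and X: "X \<in> carrier_mat n k"
  shows "hermitian n (X * P * ctrans X)"
proof -
  have Pc: "P \<in> carrier_mat k k" and cP: "ctrans P = P" using P unfolding hermitian_def by auto
  have "ctrans (X * P * ctrans X) = ctrans (ctrans X) * (ctrans P * ctrans X)"
    using X Pc by (simp add: ctrans_mult[of "X * P" n k "ctrans X" n] ctrans_mult[of X n k P k])
  also have "\<dots> = X * P * ctrans X" using X Pc cP by (simp add: mult_ctrans_assoc)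
  finally show ?thesis unfolding hermitian_def using X Pc by (meson ctrans_carrier mult_carrier_mat)
qed

lemma congruence_carrier:
  "X \<in> carrier_mat n k \<Longrightarrow> P \<in> carrier_mat k k \<Longrightarrow> X * P * ctrans X \<in> carrier_mat n n"
  by (meson ctrans_carrier mult_carrier_mat)

lemma congruence_congruence:
  assumes "X \<in> carrier_mat n n" "Y \<in> carrier_mat n n" "Z \<in> carrier_mat n n"
  shows "X * (Y * Z * ctrans Y) * ctrans X = (X * Y) * Z * ctrans (X * Y)"
proof -
  note X = assms(1) and Y = assms(2) and Z = assms(3)
  have YZ: "Y * Z \<in> carrier_mat n n" and XYZ: "X * Y * Z \<in> carrier_mat n n"
    and Yt: "ctrans Y \<in> carrier_mat n n" and Xt: "ctrans X \<in> carrier_mat n n" using assms by auto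
  have "X * (Y * Z * ctrans Y) = X * Y * Z * ctrans Y"
    by (simp only: assoc_mult_mat[OF X YZ Yt, symmetric] assoc_mult_mat[OF X Y Z, symmetric])
  then have "X * (Y * Z * ctrans Y) * ctrans X = X * Y * Z * (ctrans Y * ctrans X)"
    by (simp only: assoc_mult_mat[OF XYZ Yt Xt])
  then show ?thesis by (simp only: ctrans_mult[OF X Y])
qed

lemma det_congruence:
  assumes T: "T \<in> carrier_mat n n" and X: "X \<in> carrier_mat n n"
  shows "det (T * X * ctrans T) = complex_of_real ((cmod (det T))\<^sup>2) * det X"
proof -
  have "det (T * X * ctrans T) = (det T * cnj (det T)) * det X"
    using T X by (simp add: det_mult[of _ n] det_ctrans mult_ac)
  also have "det T * cnj (det T) = complex_of_real ((cmod (det T))\<^sup>2)"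
    by (rule complex_norm_square[symmetric])
  finally show ?thesis .
qed

abbreviation rdiag :: "nat \<Rightarrow> (nat \<Rightarrow> real) \<Rightarrow> complex mat" where
  "rdiag n r \<equiv> diag_of n (\<lambda>i. complex_of_real (r i))"

lemma diag_of_carrier[simp]: "diag_of n d \<in> carrier_mat n n"
  unfolding diag_of_def by auto

lemma dim_diag_of[simp]: "dim_row (diag_of n d) = n" "dim_col (diag_of n d) = n"
  unfolding diag_of_def by auto

lemma index_diag_of[simp]:
  "i < n \<Longrightarrow> j < n \<Longrightarrow> diag_of n d $$ (i,j) = (if i = j then d i else 0)"
  unfolding diag_of_def by auto

lemma diag_of_one: "diag_of n (\<lambda>_. 1) = 1\<^sub>m n"
  by (intro eq_matI) auto

lemma hermitian_rdiag: "hermitian n (rdiag n r)"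
  unfolding hermitian_def by (auto intro!: eq_matI)

lemma det_diag_of: "det (diag_of n d) = (\<Prod>i<n. d i)"
proof -
  have "upper_triangular (diag_of n d)" by (auto simp: upper_triangular_def)
  from det_upper_triangular[OF this diag_of_carrier]
  show ?thesis by (simp add: prod_list_diag_prod atLeast0LessThan)
qed

lemma diag_of_mult: "diag_of n a * diag_of n b = diag_of n (\<lambda>i. a i * b i)"
proof (rule eq_matI)
  fix i j assume "i < dim_row (diag_of n (\<lambda>i. a i * b i))" "j < dim_col (diag_of n (\<lambda>i. a i * b i))"
  then have i: "i < n" and j: "j < n" by auto
  have "(diag_of n a * diag_of n b) $$ (i,j)
      = (\<Sum>k<n. (if i = k then a i else 0) * (if k = j then b k else 0))"
    using i j by (simp add: scalar_prod_def atLeast0LessThan)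
  also have "\<dots> = (\<Sum>k<n. if k = i then (if i = j then a i * b i else 0) else 0)"
    by (rule sum.cong) auto
  finally show "(diag_of n a * diag_of n b) $$ (i,j) = diag_of n (\<lambda>i. a i * b i) $$ (i,j)"
    using i j by simp
qed auto

section \<open>Quadratic forms\<close>

lemma cnj_mult_self: "cnj z * z = complex_of_real ((cmod z)\<^sup>2)"
  by (metis complex_norm_square mult.commute of_real_power)

lemma qform_congruence:
  assumes X: "X \<in> carrier_mat n k" and Y: "Y \<in> carrier_mat k k" and y: "y \<in> carrier_vec n"
  shows "qform (X * Y * ctrans X) y = qform Y (ctrans X *\<^sub>v y)"
proof -
  let ?w = "ctrans X *\<^sub>v y"
  have w: "?w \<in> carrier_vec k" using X y by (metis ctrans_carrier mult_mat_vec_carrier)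
  have "(X * Y * ctrans X) *\<^sub>v y = (X * Y) *\<^sub>v ?w"
    using X Y y by (meson assoc_mult_mat_vec ctrans_carrier mult_carrier_mat)
  also have "\<dots> = X *\<^sub>v (Y *\<^sub>v ?w)" using X Y w by simp
  finally have "(X * Y * ctrans X) *\<^sub>v y = X *\<^sub>v (Y *\<^sub>v ?w)" .
  then have "qform (X * Y * ctrans X) y = (\<Sum>i<n. \<Sum>j<k. cnj (y$i) * X$$(i,j) * (Y *\<^sub>v ?w)$j)"
    using X Y y by (simp add: qform_def scalar_prod_def atLeast0LessThan sum_distrib_left mult.assoc)
  also have "\<dots> = (\<Sum>j<k. \<Sum>i<n. cnj (y$i) * X$$(i,j) * (Y *\<^sub>v ?w)$j)"
    by (rule sum.swap)
  also have "\<dots> = qform Y ?w"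
    using X Y y by (simp add: qform_def scalar_prod_def atLeast0LessThan sum_distrib_right cnj_sum mult_ac)
  finally show ?thesis .
qed

lemma Re_qform_rdiag:
  assumes z: "z \<in> carrier_vec n"
  shows "Re (qform (rdiag n r) z) = (\<Sum>i<n. r i * (cmod (z$i))\<^sup>2)"
proof -
  have "(rdiag n r *\<^sub>v z) $ i = complex_of_real (r i) * z $ i" if i: "i < n" for i
  proof -
    have "(rdiag n r *\<^sub>v z) $ i = (\<Sum>j<n. (if i = j then complex_of_real (r i) else 0) * z$j)"
      using i z by (simp add: scalar_prod_def atLeast0LessThan)
    also have "\<dots> = (\<Sum>j<n. if j = i then complex_of_real (r i) * z$j else 0)"
      by (rule sum.cong) auto
    finally show ?thesis using i by simp
  qed
  then have "qform (rdiag n r) z = (\<Sum>i<n. complex_of_real (r i) * (cnj (z$i) * z$i))"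
    using z unfolding qform_def by (auto intro!: sum.cong simp: mult_ac)
  also have "\<dots> = (\<Sum>i<n. complex_of_real (r i * (cmod (z$i))\<^sup>2))"
    by (simp only: cnj_mult_self of_real_mult)
  finally show ?thesis by (simp only: Re_sum Re_complex_of_real)
qed

lemma Re_qform_congruence_rdiag:
  assumes "U \<in> carrier_mat n k" "x \<in> carrier_vec n"
  shows "Re (qform (U * rdiag k r * ctrans U) x) = (\<Sum>i<k. r i * (cmod ((ctrans U *\<^sub>v x)$i))\<^sup>2)"
proof -
  have "ctrans U *\<^sub>v x \<in> carrier_vec k" using assms by (metis ctrans_carrier mult_mat_vec_carrier)
  then show ?thesis
    using assms by (simp only: qform_congruence[OF assms(1) diag_of_carrier assms(2)] Re_qform_rdiag)
qed

lemma Re_qform_add: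
  "A \<in> carrier_mat n n \<Longrightarrow> B \<in> carrier_mat n n \<Longrightarrow> x \<in> carrier_vec n
    \<Longrightarrow> Re (qform (A + B) x) = Re (qform A x) + Re (qform B x)"
  unfolding qform_def by (simp add: add_mult_distrib_mat_vec sum.distrib distrib_left)

lemma Re_qform_minus:
  "A \<in> carrier_mat n n \<Longrightarrow> B \<in> carrier_mat n n \<Longrightarrow> x \<in> carrier_vec n
    \<Longrightarrow> Re (qform (A - B) x) = Re (qform A x) - Re (qform B x)"
  unfolding qform_def by (simp add: minus_mult_distrib_mat_vec sum_subtractf right_diff_distrib)

lemma Re_qform_smult_real:
  assumes "A \<in> carrier_mat n n" "x \<in> carrier_vec n"
  shows "Re (qform (complex_of_real c \<cdot>\<^sub>m A) x) = c * Re (qform A x)"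
proof -
  have "qform (complex_of_real c \<cdot>\<^sub>m A) x = complex_of_real c * qform A x"
    using assms unfolding qform_def by (simp add: sum_distrib_left mult_ac)
  then show ?thesis by simp
qed

lemma Re_qform_one:
  "x \<in> carrier_vec n \<Longrightarrow> Re (qform (1\<^sub>m n) x) = (\<Sum>i<n. (cmod (x$i))\<^sup>2)"
  using Re_qform_rdiag[of x n "\<lambda>_. 1"] by (simp add: diag_of_one)

lemma loewner_le_Re_qform:
  assumes "loewner_le n X Y" "x \<in> carrier_vec n"
  shows "Re (qform X x) \<le> Re (qform Y x)"
  using assms Re_qform_minus[of Y n X x]
  unfolding loewner_le_def psd_def hermitian_def by force

lemma posdef_psd: "posdef n A \<Longrightarrow> psd n A"
  unfolding psd_def posdef_def
proof (intro conjI ballI; clarify)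
  fix x :: "complex vec"
  assume "\<forall>x\<in>carrier_vec n. x \<noteq> 0\<^sub>v n \<longrightarrow> 0 < Re (qform A x)" "x \<in> carrier_vec n"
  moreover have "qform A (0\<^sub>v n) = 0" unfolding qform_def by simp
  ultimately show "0 \<le> Re (qform A x)" by (cases "x = 0\<^sub>v n") force+
qed

lemma psd_add:
  assumes "psd n A" "psd n B"
  shows "psd n (A + B)"
  using assms Re_qform_add[of A n B] hermitian_add
  unfolding psd_def hermitian_def by (metis add_nonneg_nonneg)

section \<open>Unitary matrices\<close>

lemma unitary_carrier: "unitary n U \<Longrightarrow> U \<in> carrier_mat n n"
  unfolding unitary_def by simp

lemma unitary_ctrans_mult: "unitary n U \<Longrightarrow> ctrans U * U = 1\<^sub>m n"
  using mat_mult_left_right_inverse[of U n "ctrans U"] unfolding unitary_def by auto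

lemma unitary_congruence_one:
  assumes "unitary n U"
  shows "U * rdiag n (\<lambda>_. 1) * ctrans U = 1\<^sub>m n"
proof -
  have "rdiag n (\<lambda>_. 1) = 1\<^sub>m n" by (simp add: diag_of_one)
  then show ?thesis using assms right_mult_one_mat[OF unitary_carrier[OF assms]] unfolding unitary_def by simp
qed

lemma unitaryI_ctrans_mult: "U \<in> carrier_mat n n \<Longrightarrow> ctrans U * U = 1\<^sub>m n \<Longrightarrow> unitary n U"
  using mat_mult_left_right_inverse[of "ctrans U" n U] unfolding unitary_def by auto

lemma unitary_mult:
  assumes U: "unitary n U" and V: "unitary n V"
  shows "unitary n (U * V)"
proof -
  have Uc: "U \<in> carrier_mat n n" and Vc: "V \<in> carrier_mat n n"
    using U V by (simp_all add: unitary_carrier)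
  have "U * V * ctrans (U * V) = U * (V * 1\<^sub>m n * ctrans V) * ctrans U"
    using congruence_congruence[OF Uc Vc one_carrier_mat] Vc by simp
  also have "\<dots> = 1\<^sub>m n" using U V unfolding unitary_def by (metis right_mult_one_mat)
  finally show ?thesis unfolding unitary_def using Uc Vc by simp
qed

lemma ctrans_mult_unitary_col:
  assumes U: "unitary n U" and i: "i < n"
  shows "ctrans U *\<^sub>v col U i = unit_vec n i"
proof -
  have "ctrans U *\<^sub>v col U i = col (ctrans U * U) i"
    using unitary_carrier[OF U] i col_mult2[of "ctrans U" n n U n i] by simp
  then show ?thesis using unitary_ctrans_mult[OF U] i by simp
qed

lemma col_unitary_carrier: "unitary n U \<Longrightarrow> col U i \<in> carrier_vec n"
  using unitary_carrier by (intro carrier_vecI) auto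

lemma col_unitary_nonzero:
  assumes U: "unitary n U" and i: "i < n"
  shows "col U i \<noteq> 0\<^sub>v n"
proof
  assume "col U i = 0\<^sub>v n"
  then have "ctrans U *\<^sub>v col U i = 0\<^sub>v n"
    using unitary_carrier[OF U] by (intro eq_vecI) (simp_all add: scalar_prod_def)
  then show False using ctrans_mult_unitary_col[OF U i] i by simp
qed

lemma sum_sq_ctrans_unitary:
  assumes U: "unitary n U" and x: "x \<in> carrier_vec n"
  shows "(\<Sum>i<n. (cmod ((ctrans U *\<^sub>v x)$i))\<^sup>2) = (\<Sum>i<n. (cmod (x$i))\<^sup>2)"
proof -
  show ?thesis
    using unitary_congruence_one[OF U] Re_qform_congruence_rdiag[OF unitary_carrier[OF U] x, of "\<lambda>_. 1"] Re_qform_one[OF x] by simp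
qed

lemma cscalar_prod_normalizer:
  assumes w: "w \<in> carrier_vec n" and w0: "w \<bullet>c w \<noteq> 0"
  shows "\<exists>c. cnj c * c * (w \<bullet>c w) = 1"
proof -
  define s where "s = (\<Sum>k<n. (cmod (w $ k))\<^sup>2)"
  have ww: "w \<bullet>c w = complex_of_real s"
    using w unfolding s_def by (simp add: scalar_prod_def atLeast0LessThan flip: complex_norm_square of_real_power)
  moreover have "s \<ge> 0" unfolding s_def by (intro sum_nonneg) auto
  ultimately have "s > 0" using w0 by force
  then have "cnj (complex_of_real (1 / sqrt s)) * complex_of_real (1 / sqrt s) * (w \<bullet>c w) = 1"
    unfolding ww by (simp only: complex_cnj_complex_of_real flip: of_real_mult) (simp add: field_simps)
  then show ?thesis by blast
qed

lemma unitary_of_corthogonal: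
  assumes ws: "set ws \<subseteq> carrier_vec n" and orth: "corthogonal ws" and len: "length ws = n"
  shows "\<exists>W c. unitary n W \<and> (\<forall>i<n. col W i = c i \<cdot>\<^sub>v ws ! i)"
proof -
  have wsi: "ws ! i \<in> carrier_vec n" if "i < n" for i using ws len that by auto
  have "\<exists>c. cnj c * c * (ws ! i \<bullet>c ws ! i) = 1" if "i < n" for i
  proof (rule cscalar_prod_normalizer[OF wsi[OF that]])
    show "ws ! i \<bullet>c ws ! i \<noteq> 0" using orth that len unfolding corthogonal_def by blast
  qed
  then obtain c where c: "\<And>i. i < n \<Longrightarrow> cnj (c i) * c i * (ws ! i \<bullet>c ws ! i) = 1" by metis
  define W where "W = mat n n (\<lambda>(k,i). c i * (ws ! i) $ k)"
  have W: "W \<in> carrier_mat n n" unfolding W_def by simp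
  have "ctrans W * W = 1\<^sub>m n"
  proof (rule eq_matI)
    fix i j assume "i < dim_row (1\<^sub>m n)" "j < dim_col (1\<^sub>m n)"
    then have i: "i < n" and j: "j < n" by auto
    have "(ctrans W * W) $$ (i,j) = cnj (c i) * c j * (ws ! j \<bullet>c ws ! i)"
      using W i j wsi[OF i] wsi[OF j] unfolding W_def
      by (simp add: scalar_prod_def atLeast0LessThan sum_distrib_left mult_ac)
    also have "\<dots> = 1\<^sub>m n $$ (i,j)"
      using c[OF i] orth i j len by (auto simp: corthogonal_def)
    finally show "(ctrans W * W) $$ (i,j) = 1\<^sub>m n $$ (i,j)" .
  qed (use W in auto)
  moreover have "col W i = c i \<cdot>\<^sub>v ws ! i" if "i < n" for i
    using that wsi[OF that] unfolding W_def by (intro eq_vecI) auto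
  ultimately show ?thesis using unitaryI_ctrans_mult[OF W] by blast
qed

lemma unitary_with_first_col:
  assumes v: "v \<in> carrier_vec n" and v0: "v \<noteq> 0\<^sub>v n"
  shows "\<exists>W c. unitary n W \<and> col W 0 = c \<cdot>\<^sub>v v"
proof -
  interpret cof_vec_space n "TYPE(complex)" .
  define b where "b = basis_completion v"
  define ws where "ws = gram_schmidt n b"
  from basis_completion[OF v v0, folded b_def]
  have b: "set b \<subseteq> carrier_vec n" "distinct b" "\<not> lin_dep (set b)"
    and hd_b: "hd b = v" and len_b: "length b = n" by auto
  have n: "n > 0" using v v0 by (cases n) auto
  then obtain vs where bv: "b = v # vs" using hd_b len_b by (cases b) auto
  from gram_schmidt_result[OF b refl, folded ws_def]
  have ws: "set ws \<subseteq> carrier_vec n" "corthogonal ws" "length ws = n"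
    by (auto simp: len_b)
  have "hd ws = v" unfolding ws_def bv using gram_schmidt_hd[OF v] by simp
  then have "ws ! 0 = v" using ws(3) n by (cases ws) auto
  with unitary_of_corthogonal[OF ws] n show ?thesis by metis
qed

section \<open>The spectral theorem for Hermitian matrices\<close>

definition dsum_scalar :: "nat \<Rightarrow> complex \<Rightarrow> complex mat \<Rightarrow> complex mat" where
  "dsum_scalar n a X = mat (Suc n) (Suc n) (\<lambda>(i,j). if i = 0 then (if j = 0 then a else 0)
      else if j = 0 then 0 else X $$ (i - 1, j - 1))"

lemma dsum_scalar_carrier[simp]: "dsum_scalar n a X \<in> carrier_mat (Suc n) (Suc n)"
  unfolding dsum_scalar_def by simp

lemma dim_dsum_scalar[simp]:
  "dim_row (dsum_scalar n a X) = Suc n" "dim_col (dsum_scalar n a X) = Suc n"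
  unfolding dsum_scalar_def by simp_all

lemma index_dsum_scalar:
  "i < Suc n \<Longrightarrow> j < Suc n \<Longrightarrow> dsum_scalar n a X $$ (i,j) = (if i = 0 then (if j = 0 then a else 0)
      else if j = 0 then 0 else X $$ (i - 1, j - 1))"
  unfolding dsum_scalar_def by simp

lemma dsum_scalar_mult:
  assumes X: "X \<in> carrier_mat n n" and Y: "Y \<in> carrier_mat n n"
  shows "dsum_scalar n a X * dsum_scalar n b Y = dsum_scalar n (a * b) (X * Y)"
proof (rule eq_matI)
  fix i j assume "i < dim_row (dsum_scalar n (a * b) (X * Y))" "j < dim_col (dsum_scalar n (a * b) (X * Y))"
  then have i: "i < Suc n" and j: "j < Suc n" by auto
  have "(dsum_scalar n a X * dsum_scalar n b Y) $$ (i,j)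
      = dsum_scalar n a X $$ (i,0) * dsum_scalar n b Y $$ (0,j) +
        (\<Sum>k<n. dsum_scalar n a X $$ (i,Suc k) * dsum_scalar n b Y $$ (Suc k,j))"
    using i j by (simp add: scalar_prod_def atLeast0LessThan sum.lessThan_Suc_shift del: sum.lessThan_Suc)
  also have "\<dots> = dsum_scalar n (a * b) (X * Y) $$ (i,j)"
  proof (cases "i = 0 \<or> j = 0")
    case True
    then show ?thesis using i j by (auto simp: index_dsum_scalar)
  next
    case False
    then obtain i' j' where i': "i = Suc i'" and j': "j = Suc j'" by (meson not0_implies_Suc)
    have "(\<Sum>k<n. dsum_scalar n a X $$ (i,Suc k) * dsum_scalar n b Y $$ (Suc k,j))
        = (\<Sum>k<n. X $$ (i',k) * Y $$ (k,j'))"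
      using i j i' j' by (intro sum.cong) (auto simp: index_dsum_scalar)
    also have "\<dots> = (X * Y) $$ (i', j')"
      using X Y i j i' j' by (simp add: scalar_prod_def atLeast0LessThan)
    finally show ?thesis using i j i' j' by (simp add: index_dsum_scalar)
  qed
  finally show "(dsum_scalar n a X * dsum_scalar n b Y) $$ (i,j) = dsum_scalar n (a * b) (X * Y) $$ (i,j)" .
qed auto

lemma ctrans_dsum_scalar:
  "X \<in> carrier_mat n n \<Longrightarrow> ctrans (dsum_scalar n a X) = dsum_scalar n (cnj a) (ctrans X)"
  by (intro eq_matI) (auto simp: index_dsum_scalar)

lemma dsum_scalar_rdiag:
  "dsum_scalar n (complex_of_real a) (rdiag n r) = rdiag (Suc n) (\<lambda>i. if i = 0 then a else r (i - 1))"
  by (intro eq_matI) (auto simp: index_dsum_scalar)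

lemma unitary_dsum_scalar:
  assumes "unitary n V"
  shows "unitary (Suc n) (dsum_scalar n 1 V)"
proof -
  have "dsum_scalar n 1 V * ctrans (dsum_scalar n 1 V) = dsum_scalar n 1 (1\<^sub>m n)"
    using assms by (simp add: unitary_def ctrans_dsum_scalar dsum_scalar_mult)
  also have "\<dots> = 1\<^sub>m (Suc n)" by (intro eq_matI) (auto simp: index_dsum_scalar)
  finally show ?thesis unfolding unitary_def by simp
qed

lemma hermitian_dsum_scalar_of_col:
  assumes C: "hermitian (Suc n) C" and col: "col C 0 = lam \<cdot>\<^sub>v unit_vec (Suc n) 0"
  defines "C' \<equiv> mat n n (\<lambda>(i,j). C $$ (Suc i, Suc j))"
  shows "lam \<in> \<real>" "hermitian n C'" "C = dsum_scalar n lam C'"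
proof -
  have Cc: "C \<in> carrier_mat (Suc n) (Suc n)" and cC: "ctrans C = C"
    using C unfolding hermitian_def by auto
  have conj: "cnj (C $$ (j,i)) = C $$ (i,j)" if "i < Suc n" "j < Suc n" for i j
    using that Cc index_ctrans[of i C j] cC by simp
  have C_i0: "C $$ (i,0) = (if i = 0 then lam else 0)" if "i < Suc n" for i
    using that Cc arg_cong[OF col, of "\<lambda>v. v $ i"] by simp
  have C_0j: "C $$ (0,j) = (if j = 0 then cnj lam else 0)" if "j < Suc n" for j
    using conj[of 0 j] C_i0[of j] that by (auto split: if_splits)
  show "lam \<in> \<real>" using C_0j[of 0] C_i0[of 0] by (simp add: Reals_cnj_iff)
  then show "C = dsum_scalar n lam C'"
    using Cc C_i0 C_0j by (intro eq_matI) (auto simp: index_dsum_scalar C'_def Reals_cnj_iff)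
  show "hermitian n C'"
    unfolding hermitian_def C'_def using conj by (auto intro!: eq_matI)
qed

lemma hermitian_deflation:
  assumes "hermitian (Suc n) A"
  shows "\<exists>W lam A'. unitary (Suc n) W \<and> lam \<in> \<real> \<and> hermitian n A' \<and> A = W * dsum_scalar n lam A' * ctrans W"
proof -
  have A: "A \<in> carrier_mat (Suc n) (Suc n)" using assms by (rule hermitian_carrier)
  obtain lam v where v: "v \<in> carrier_vec (Suc n)" "v \<noteq> 0\<^sub>v (Suc n)" and Av: "A *\<^sub>v v = lam \<cdot>\<^sub>v v"
    using spectrum_non_empty[OF A] A unfolding spectrum_def eigenvalue_def eigenvector_def by auto
  obtain W c where W: "unitary (Suc n) W" and Wv: "col W 0 = c \<cdot>\<^sub>v v"
    using unitary_with_first_col[OF v] by blast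
  have Wc: "W \<in> carrier_mat (Suc n) (Suc n)" using W by (rule unitary_carrier)
  define C where "C = ctrans W * A * W"
  have "hermitian (Suc n) C"
    using hermitian_congruence[OF assms, of "ctrans W"] Wc unfolding C_def by simp
  moreover have "col C 0 = lam \<cdot>\<^sub>v unit_vec (Suc n) 0"
  proof -
    have w: "col W 0 \<in> carrier_vec (Suc n)" using W by (rule col_unitary_carrier)
    have Aw: "A *\<^sub>v col W 0 = lam \<cdot>\<^sub>v col W 0"
      unfolding Wv using A v Av by (simp add: mult_mat_vec smult_smult_assoc mult.commute)
    have "col C 0 = (ctrans W * A) *\<^sub>v col W 0"
      unfolding C_def by (rule col_mult2) (use A Wc in auto)
    also have "\<dots> = ctrans W *\<^sub>v (lam \<cdot>\<^sub>v col W 0)"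
      using A Wc w by (simp add: assoc_mult_mat_vec[of _ "Suc n" "Suc n"] Aw)
    also have "\<dots> = lam \<cdot>\<^sub>v unit_vec (Suc n) 0"
      using mult_mat_vec[OF ctrans_carrier[OF Wc] w] ctrans_mult_unitary_col[OF W] by simp
    finally show ?thesis .
  qed
  moreover have "A = W * C * ctrans W"
  proof -
    have "W * C * ctrans W = (W * ctrans W) * A * ctrans (W * ctrans W)"
      using congruence_congruence[OF Wc ctrans_carrier[OF Wc] A] unfolding C_def by simp
    then show ?thesis using W A unfolding unitary_def by simp
  qed
  ultimately show ?thesis using W hermitian_dsum_scalar_of_col by metis
qed

theorem hermitian_spectral:
  assumes "hermitian n A"
  shows "\<exists>U r. unitary n U \<and> A = U * rdiag n r * ctrans U"
  using assms
proof (induction n arbitrary: A)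
  case 0
  then have "unitary 0 (1\<^sub>m 0) \<and> A = 1\<^sub>m 0 * rdiag 0 (\<lambda>_. 0) * ctrans (1\<^sub>m 0)"
    unfolding unitary_def hermitian_def by (auto intro!: eq_matI)
  then show ?case by (intro exI[of _ "1\<^sub>m 0"] exI[of _ "\<lambda>_. 0"])
next
  case (Suc n)
  obtain W lam A' where W: "unitary (Suc n) W" and lam: "lam \<in> \<real>" and A': "hermitian n A'"
    and A: "A = W * dsum_scalar n lam A' * ctrans W"
    using hermitian_deflation[OF Suc.prems] by blast
  obtain V r where V: "unitary n V" and A'V: "A' = V * rdiag n r * ctrans V"
    using Suc.IH[OF A'] by blast
  define E where "E = dsum_scalar n 1 V"
  define r' where "r' i = (if i = 0 then Re lam else r (i - 1))" for i
  have Vc: "V \<in> carrier_mat n n" using V by (rule unitary_carrier)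
  have "dsum_scalar n lam A' = E * rdiag (Suc n) r' * ctrans E"
    using lam Vc unfolding A'V E_def r'_def
    by (simp add: dsum_scalar_rdiag[symmetric] ctrans_dsum_scalar dsum_scalar_mult of_real_Re)
  then have "A = (W * E) * rdiag (Suc n) r' * ctrans (W * E)"
    unfolding A E_def using unitary_carrier[OF W] by (simp add: congruence_congruence)
  moreover have "unitary (Suc n) (W * E)"
    unfolding E_def by (rule unitary_mult[OF W unitary_dsum_scalar[OF V]])
  ultimately show ?case by blast
qed

lemma mat_fun_spectral:
  assumes "hermitian n A"
  shows "\<exists>U r. unitary n U \<and> A = U * rdiag n r * ctrans U \<and>
     mat_fun n f A = U * rdiag n (\<lambda>i. f (r i)) * ctrans U"
proof -
  obtain U r where "unitary n U" "A = U * rdiag n r * ctrans U"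
    using hermitian_spectral[OF assms] by blast
  then have "\<exists>B U d. unitary n U \<and> (\<forall>i<n. d i \<in> \<real>) \<and> A = U * diag_of n d * ctrans U \<and>
      B = U * diag_of n (\<lambda>i. complex_of_real (f (Re (d i)))) * ctrans U"
    by (intro exI[of _ "U * rdiag n (\<lambda>i. f (r i)) * ctrans U"] exI[of _ U]
        exI[of _ "\<lambda>i. complex_of_real (r i)"]) auto
  from someI_ex[OF this]
  obtain U' d where U': "unitary n U'" and d: "\<forall>i<n. d i \<in> \<real>"
    and A: "A = U' * diag_of n d * ctrans U'"
    and F: "mat_fun n f A = U' * diag_of n (\<lambda>i. complex_of_real (f (Re (d i)))) * ctrans U'"
    unfolding mat_fun_def by blast
  have "diag_of n d = rdiag n (\<lambda>i. Re (d i))"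
    using d by (intro eq_matI) auto
  then show ?thesis using U' A F by metis
qed

section \<open>Spectral decompositions and the Loewner order\<close>

lemma Re_qform_rdiag_unitary_col:
  assumes U: "unitary n U" and i: "i < n"
  shows "Re (qform (U * rdiag n r * ctrans U) (col U i)) = r i"
proof -
  have "(\<Sum>k<n. r k * (cmod (unit_vec n i $ k))\<^sup>2) = (\<Sum>k<n. if k = i then r i else 0)"
    using i by (intro sum.cong) auto
  then show ?thesis
    using Re_qform_congruence_rdiag[OF unitary_carrier[OF U] col_unitary_carrier[OF U]]
      ctrans_mult_unitary_col[OF U i] i by simp
qed

lemma eigenvalue_unitary_congruence_rdiag:
  assumes U: "unitary n U" and i: "i < n"
  shows "eigenvalue (U * rdiag n r * ctrans U) (complex_of_real (r i))"
proof -
  have Uc: "U \<in> carrier_mat n n" using U by (rule unitary_carrier)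
  have "rdiag n r *\<^sub>v unit_vec n i = complex_of_real (r i) \<cdot>\<^sub>v unit_vec n i"
    using i by (intro eq_vecI) (auto simp: scalar_prod_def atLeast0LessThan if_distrib cong: if_cong)
  then have "(U * rdiag n r * ctrans U) *\<^sub>v col U i = complex_of_real (r i) \<cdot>\<^sub>v (U *\<^sub>v unit_vec n i)"
    using Uc col_unitary_carrier[OF U, of i] ctrans_mult_unitary_col[OF U i]
    by (simp add: assoc_mult_mat_vec[of _ n n _ n] mult_mat_vec[of U n n])
  also have "U *\<^sub>v unit_vec n i = col U i"
    using col_mult2[of U n n "1\<^sub>m n" n i] Uc i by simp
  finally show ?thesis
    unfolding eigenvalue_def eigenvector_def
    using Uc col_unitary_carrier[OF U] col_unitary_nonzero[OF U i] by auto
qed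

lemma loewner_bounds_rdiag:
  assumes U: "unitary n U" and A: "A = U * rdiag n r * ctrans U"
    and lo: "loewner_le n (complex_of_real m \<cdot>\<^sub>m 1\<^sub>m n) A"
    and hi: "loewner_le n A (complex_of_real M \<cdot>\<^sub>m 1\<^sub>m n)" and i: "i < n"
  shows "m \<le> r i" "r i \<le> M"
proof -
  have u: "col U i \<in> carrier_vec n" using U by (rule col_unitary_carrier)
  have "Re (qform (1\<^sub>m n) (col U i)) = 1"
    using Re_qform_rdiag_unitary_col[OF U i, of "\<lambda>_. 1"] unfolding unitary_congruence_one[OF U] .
  then have "Re (qform (complex_of_real c \<cdot>\<^sub>m 1\<^sub>m n) (col U i)) = c" for c
    using Re_qform_smult_real[OF one_carrier_mat u] by simp
  then show "m \<le> r i" "r i \<le> M"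
    using loewner_le_Re_qform[OF lo u] loewner_le_Re_qform[OF hi u]
      Re_qform_rdiag_unitary_col[OF U i] A by auto
qed

lemma psd_congruence_rdiag:
  assumes U: "U \<in> carrier_mat n k" and g: "\<forall>i<k. 0 \<le> g i"
  shows "psd n (U * rdiag k g * ctrans U)"
  unfolding psd_def using hermitian_congruence[OF hermitian_rdiag U] g
  by (auto simp: Re_qform_congruence_rdiag[OF U] intro!: sum_nonneg)

lemma psd_smult_congruence_rdiag_minus:
  assumes U: "U \<in> carrier_mat n k" and g: "\<forall>i<k. g i \<le> c * r i"
  shows "psd n (complex_of_real c \<cdot>\<^sub>m (U * rdiag k r * ctrans U) - U * rdiag k g * ctrans U)"
  unfolding psd_def
proof (intro conjI ballI)
  have "hermitian n (U * rdiag k h * ctrans U)" for h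
    using hermitian_congruence[OF hermitian_rdiag U] .
  then show "hermitian n (complex_of_real c \<cdot>\<^sub>m (U * rdiag k r * ctrans U) - U * rdiag k g * ctrans U)"
    by (simp add: hermitian_minus hermitian_smult_real)
  fix x :: "complex vec" assume x: "x \<in> carrier_vec n"
  let ?w = "\<lambda>i. (cmod ((ctrans U *\<^sub>v x)$i))\<^sup>2"
  have "(\<Sum>i<k. g i * ?w i) \<le> (\<Sum>i<k. c * r i * ?w i)"
    using g by (intro sum_mono mult_right_mono) auto
  moreover have "Re (qform (complex_of_real c \<cdot>\<^sub>m (U * rdiag k r * ctrans U) - U * rdiag k g * ctrans U) x)
      = c * (\<Sum>i<k. r i * ?w i) - (\<Sum>i<k. g i * ?w i)"
    using hermitian_carrier[OF \<open>\<And>h. hermitian n (U * rdiag k h * ctrans U)\<close>] x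
    by (simp only: Re_qform_minus[of _ n] smult_carrier_mat Re_qform_smult_real[of _ n]
        Re_qform_congruence_rdiag[OF U x])
  ultimately show "0 \<le> Re (qform (complex_of_real c \<cdot>\<^sub>m (U * rdiag k r * ctrans U) - U * rdiag k g * ctrans U) x)"
    by (simp add: sum_distrib_left mult.assoc)
qed

lemma mat_fun_loewner_bounds:
  assumes A: "hermitian n A"
    and lo: "loewner_le n (complex_of_real m \<cdot>\<^sub>m 1\<^sub>m n) A"
    and hi: "loewner_le n A (complex_of_real M \<cdot>\<^sub>m 1\<^sub>m n)"
    and f: "\<And>t. m \<le> t \<Longrightarrow> t \<le> M \<Longrightarrow> 0 \<le> f t \<and> f t \<le> c * t"
  shows "psd n (mat_fun n f A)" "psd n (complex_of_real c \<cdot>\<^sub>m A - mat_fun n f A)"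
proof -
  obtain U r where U: "unitary n U" and Ar: "A = U * rdiag n r * ctrans U"
    and F: "mat_fun n f A = U * rdiag n (\<lambda>i. f (r i)) * ctrans U"
    using mat_fun_spectral[OF A] by blast
  have "0 \<le> f (r i) \<and> f (r i) \<le> c * r i" if "i < n" for i
    using f loewner_bounds_rdiag[OF U Ar lo hi that] by blast
  then show "psd n (mat_fun n f A)" "psd n (complex_of_real c \<cdot>\<^sub>m A - mat_fun n f A)"
    unfolding F using psd_congruence_rdiag psd_smult_congruence_rdiag_minus unitary_carrier[OF U]
    by (auto simp: Ar)
qed

lemma psd_antisym_zero:
  assumes P: "psd n P" and P': "psd n (0\<^sub>m n n - P)"
  shows "P = 0\<^sub>m n n"
proof -
  obtain U r where U: "unitary n U" and Pr: "P = U * rdiag n r * ctrans U"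
    using hermitian_spectral P unfolding psd_def by blast
  have "r i = 0" if i: "i < n" for i
  proof -
    have u: "col U i \<in> carrier_vec n" using U by (rule col_unitary_carrier)
    have Pu: "Re (qform P (col U i)) = r i" unfolding Pr by (rule Re_qform_rdiag_unitary_col[OF U i])
    have "qform (0\<^sub>m n n) (col U i) = 0"
      unfolding qform_def using unitary_carrier[OF U] u by simp
    then have "Re (qform (0\<^sub>m n n - P) (col U i)) = - r i"
      using Re_qform_minus[OF zero_carrier_mat hermitian_carrier u] P Pu unfolding psd_def by simp
    then show ?thesis using P P' u Pu unfolding psd_def by force
  qed
  then have "rdiag n r = 0\<^sub>m n n" by (intro eq_matI) auto
  then show ?thesis unfolding Pr using unitary_carrier[OF U] by simp
qed

lemma psd_minus_of_separated_rdiag: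
  assumes UA: "unitary n UA" and UB: "unitary n UB"
    and rB: "\<forall>i<n. rB i \<le> a" and rA: "\<forall>i<n. a \<le> rA i"
  shows "psd n (UA * rdiag n rA * ctrans UA - UB * rdiag n rB * ctrans UB)"
  unfolding psd_def
proof (intro conjI ballI)
  show "hermitian n (UA * rdiag n rA * ctrans UA - UB * rdiag n rB * ctrans UB)"
    using hermitian_congruence[OF hermitian_rdiag] unitary_carrier UA UB by (simp add: hermitian_minus)
  fix x :: "complex vec" assume x: "x \<in> carrier_vec n"
  let ?wA = "\<lambda>i. (cmod ((ctrans UA *\<^sub>v x)$i))\<^sup>2" and ?wB = "\<lambda>i. (cmod ((ctrans UB *\<^sub>v x)$i))\<^sup>2"
  have "(\<Sum>i<n. rB i * ?wB i) \<le> (\<Sum>i<n. a * ?wB i)"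
    using rB by (intro sum_mono mult_right_mono) auto
  also have "\<dots> = (\<Sum>i<n. a * ?wA i)"
    using sum_sq_ctrans_unitary[OF UA x] sum_sq_ctrans_unitary[OF UB x] by (simp flip: sum_distrib_left)
  also have "\<dots> \<le> (\<Sum>i<n. rA i * ?wA i)"
    using rA by (intro sum_mono mult_right_mono) auto
  moreover have "Re (qform (UA * rdiag n rA * ctrans UA - UB * rdiag n rB * ctrans UB) x)
      = (\<Sum>i<n. rA i * ?wA i) - (\<Sum>i<n. rB i * ?wB i)"
    using unitary_carrier[OF UA] unitary_carrier[OF UB]
    by (simp only: Re_qform_minus[OF congruence_carrier congruence_carrier x] diag_of_carrier
        Re_qform_congruence_rdiag[OF _ x])
  ultimately show "0 \<le> Re (qform (UA * rdiag n rA * ctrans UA - UB * rdiag n rB * ctrans UB) x)"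
    by simp
qed

lemma psd_minus_of_separated_eigenvalues:
  assumes A: "hermitian n A" and B: "hermitian n B"
    and sep: "(\<forall>k. eigenvalue B k \<longrightarrow> Re k < lambda_min A) \<or> (\<forall>k. eigenvalue B k \<longrightarrow> lambda_max A < Re k)"
  shows "psd n (A - B) \<or> psd n (B - A)"
proof -
  obtain UA rA where UA: "unitary n UA" and Ar: "A = UA * rdiag n rA * ctrans UA"
    using hermitian_spectral[OF A] by blast
  obtain UB rB where UB: "unitary n UB" and Br: "B = UB * rdiag n rB * ctrans UB"
    using hermitian_spectral[OF B] by blast
  have "{Re k |k. eigenvalue A k} = Re ` spectrum A" unfolding spectrum_def by auto
  then have fin: "finite {Re k |k. eigenvalue A k}"
    using card_finite_spectrum(1)[OF hermitian_carrier[OF A]] by simp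
  have "rA i \<in> {Re k |k. eigenvalue A k}" if "i < n" for i
    using eigenvalue_unitary_congruence_rdiag[OF UA that] Ar by force
  then have rA: "\<forall>i<n. lambda_min A \<le> rA i \<and> rA i \<le> lambda_max A"
    unfolding lambda_min_def lambda_max_def using fin by auto
  have rB: "\<forall>i<n. eigenvalue B (complex_of_real (rB i))"
    using eigenvalue_unitary_congruence_rdiag[OF UB] Br by blast
  from sep show ?thesis
  proof
    assume "\<forall>k. eigenvalue B k \<longrightarrow> Re k < lambda_min A"
    then have "\<forall>i<n. rB i \<le> lambda_min A" using rB by (metis Re_complex_of_real less_imp_le)
    then show ?thesis using psd_minus_of_separated_rdiag[OF UA UB] rA Ar Br by blast
  next
    assume "\<forall>k. eigenvalue B k \<longrightarrow> lambda_max A < Re k"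
    then have "\<forall>i<n. lambda_max A \<le> rB i" using rB by (metis Re_complex_of_real less_imp_le)
    then show ?thesis using psd_minus_of_separated_rdiag[OF UB UA] rA Ar Br by blast
  qed
qed

section \<open>Simultaneous diagonalization by congruence\<close>

lemma congruence_add:
  assumes X: "X \<in> carrier_mat n n" and P: "P \<in> carrier_mat n n" and R: "R \<in> carrier_mat n n"
  shows "X * P * ctrans X + X * R * ctrans X = X * (P + R) * ctrans X"
  using X P R by (simp add: mult_add_distrib_mat[of X n n P] add_mult_distrib_mat[of _ n n _ "ctrans X" n])

lemma rdiag_add: "rdiag n a + rdiag n b = rdiag n (\<lambda>i. a i + b i)"
  by (intro eq_matI) auto

lemma posdef_factor:
  assumes Q: "posdef n Q"
  shows "\<exists>S S'. S \<in> carrier_mat n n \<and> S' \<in> carrier_mat n n \<and> S * S' = 1\<^sub>m n \<and> Q = S * ctrans S"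
proof -
  obtain U q where U: "unitary n U" and Qq: "Q = U * rdiag n q * ctrans U"
    using hermitian_spectral Q unfolding posdef_def by blast
  have Uc: "U \<in> carrier_mat n n" using U by (rule unitary_carrier)
  have q: "q i > 0" if i: "i < n" for i
    using Q col_unitary_carrier[OF U, of i] col_unitary_nonzero[OF U i] Re_qform_rdiag_unitary_col[OF U i, of q]
    unfolding posdef_def Qq by auto
  define D where "D = rdiag n (\<lambda>i. sqrt (q i))"
  define D' where "D' = rdiag n (\<lambda>i. 1 / sqrt (q i))"
  have Dc: "D \<in> carrier_mat n n" and D'c: "D' \<in> carrier_mat n n" unfolding D_def D'_def by simp_all
  have q_simps: "q i \<noteq> 0" "\<bar>q i\<bar> = q i" if "i < n" for i
    using q[OF that] by auto
  have "D * D' = rdiag n (\<lambda>_. 1)" and DD: "D * 1\<^sub>m n * ctrans D = rdiag n q"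
    using Dc hermitian_rdiag[of n "\<lambda>i. sqrt (q i)"]
    unfolding D_def D'_def hermitian_def by (auto simp: diag_of_mult q_simps simp flip: of_real_mult intro!: eq_matI)
  moreover have "U * D * (D' * ctrans U) = U * (D * D') * ctrans U"
    using Uc Dc D'c by (simp add: assoc_mult_mat[of _ n n _ n _ n])
  ultimately have "U * D * (D' * ctrans U) = 1\<^sub>m n"
    using unitary_congruence_one[OF U] by simp
  moreover have "Q = (U * D) * 1\<^sub>m n * ctrans (U * D)"
    unfolding Qq DD[symmetric] using congruence_congruence[OF Uc Dc one_carrier_mat] .
  ultimately show ?thesis using Uc Dc D'c by (metis mult_carrier_mat right_mult_one_mat ctrans_carrier)
qed

lemma congruent_rdiag_bounds:
  assumes T: "T \<in> carrier_mat n n" and T': "T' \<in> carrier_mat n n" and TT': "T * T' = 1\<^sub>m n"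
    and P: "P = T * rdiag n t * ctrans T" and psdP: "psd n P" and psdQP: "psd n (T * ctrans T - P)"
    and i: "i < n"
  shows "0 \<le> t i \<and> t i \<le> 1"
proof -
  define y where "y = ctrans T' *\<^sub>v unit_vec n i"
  have y: "y \<in> carrier_vec n" unfolding y_def using T' by (metis ctrans_carrier mult_mat_vec_carrier unit_vec_carrier)
  have "ctrans T * ctrans T' = 1\<^sub>m n"
    using ctrans_mult[OF T' T] mat_mult_left_right_inverse[OF T T' TT'] by simp
  then have Ty: "ctrans T *\<^sub>v y = unit_vec n i"
    unfolding y_def using T T' by (simp add: assoc_mult_mat_vec[of _ n n _ n, symmetric])
  have "Re (qform (T * rdiag n r * ctrans T) y) = r i" for r
  proof -
    have "(\<Sum>k<n. r k * (cmod (unit_vec n i $ k))\<^sup>2) = (\<Sum>k<n. if k = i then r i else 0)"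
      using i by (intro sum.cong) auto
    then show ?thesis using Re_qform_congruence_rdiag[OF T y] Ty i by simp
  qed
  from this[of t] this[of "\<lambda>_. 1"] show ?thesis
    using psdP psdQP y T
      Re_qform_minus[OF mult_carrier_mat[OF T ctrans_carrier[OF T]] congruence_carrier[OF T diag_of_carrier] y]
    unfolding psd_def P by (auto simp: diag_of_one right_mult_one_mat[OF T])
qed

lemma psd_le_posdef_congruent_rdiag:
  assumes Q: "posdef n Q" and P: "psd n P" and QP: "psd n (Q - P)"
  shows "\<exists>T t. T \<in> carrier_mat n n \<and> det T \<noteq> 0 \<and> Q = T * ctrans T \<and> P = T * rdiag n t * ctrans T
    \<and> (\<forall>i<n. 0 \<le> t i \<and> t i \<le> 1)"
proof -
  obtain S S' where S: "S \<in> carrier_mat n n" and S': "S' \<in> carrier_mat n n" and SS': "S * S' = 1\<^sub>m n"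
    and QS: "Q = S * ctrans S"
    using posdef_factor[OF Q] by blast
  have Pc: "P \<in> carrier_mat n n" using P unfolding psd_def hermitian_def by simp
  obtain V t where V: "unitary n V" and Vt: "S' * P * ctrans S' = V * rdiag n t * ctrans V"
    using hermitian_spectral[OF hermitian_congruence[OF _ S']] P unfolding psd_def by blast
  have Vc: "V \<in> carrier_mat n n" using V by (rule unitary_carrier)
  define T where "T = S * V"
  define T' where "T' = ctrans V * S'"
  have T: "T \<in> carrier_mat n n" and T': "T' \<in> carrier_mat n n" unfolding T_def T'_def using S S' Vc by auto
  have "T * T' = S * ((V * ctrans V) * S')"
    unfolding T_def T'_def using S S' Vc
    by (simp only: assoc_mult_mat[OF S Vc mult_carrier_mat[OF ctrans_carrier[OF Vc] S']]
        assoc_mult_mat[OF Vc ctrans_carrier[OF Vc] S'])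
  then have TT': "T * T' = 1\<^sub>m n" using V SS' S' unfolding unitary_def by simp
  have "det T * det T' = 1" using det_mult[OF T T'] TT' by simp
  then have "det T \<noteq> 0" by auto
  moreover have "Q = T * ctrans T"
    using congruence_congruence[OF S Vc one_carrier_mat] V QS S unfolding T_def unitary_def
    by (simp add: right_mult_one_mat[OF Vc] right_mult_one_mat[OF mult_carrier_mat[OF S Vc]])
  moreover have "P = T * rdiag n t * ctrans T"
  proof -
    have "P = (S * S') * P * ctrans (S * S')" using SS' Pc by simp
    also have "\<dots> = S * (S' * P * ctrans S') * ctrans S"
      using congruence_congruence[OF S S' Pc] by simp
    finally show ?thesis unfolding Vt T_def using congruence_congruence[OF S Vc] by simp
  qed
  moreover have "\<forall>i<n. 0 \<le> t i \<and> t i \<le> 1"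
    using congruent_rdiag_bounds[OF T T' TT'] calculation P QP by blast
  ultimately show ?thesis using T by blast
qed

section \<open>Scalar inequalities\<close>

lemma prod_one_plus_le:
  fixes t :: "nat \<Rightarrow> real"
  assumes "\<forall>i<n. 0 \<le> t i \<and> t i \<le> 1"
  shows "2 * (\<Prod>i<n. 1 + t i) \<le> 2 ^ n * (1 + (\<Prod>i<n. t i))"
  using assms
proof (induction n)
  case 0
  then show ?case by simp
next
  case (Suc n)
  define p where "p = (\<Prod>i<n. t i)"
  have p: "0 \<le> p" "p \<le> 1" unfolding p_def using Suc.prems by (auto intro: prod_nonneg prod_le_1)
  have x: "0 \<le> t n" "t n \<le> 1" using Suc.prems by auto
  have IH: "2 * (\<Prod>i<n. 1 + t i) \<le> 2 ^ n * (1 + p)" using Suc unfolding p_def by simp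
  have "2 * (\<Prod>i<Suc n. 1 + t i) = 2 * (\<Prod>i<n. 1 + t i) * (1 + t n)" by simp
  also have "\<dots> \<le> 2 ^ n * ((1 + p) * (1 + t n))"
    using mult_right_mono[OF IH, of "1 + t n"] x by (simp add: mult_ac)
  also have "\<dots> \<le> 2 ^ n * (2 * (1 + p * t n))"
    using mult_nonneg_nonneg[of "1 - p" "1 - t n"] p x by (intro mult_left_mono) (auto simp: algebra_simps)
  also have "\<dots> = 2 ^ Suc n * (1 + (\<Prod>i<Suc n. t i))" unfolding p_def by simp
  finally show ?case .
qed

lemma convex_on_le_chord_origin:
  fixes f :: "real \<Rightarrow> real"
  assumes conv: "convex_on {0..} f" and f0: "f 0 = 0" and M: "0 < M" and t: "0 \<le> t" "t \<le> M"
  shows "f t \<le> f M / M * t"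
proof -
  have "f ((1 - t / M) *\<^sub>R 0 + (t / M) *\<^sub>R M) \<le> (1 - t / M) * f 0 + (t / M) * f M"
    using convex_onD[OF conv, of "t / M" 0 M] t M by auto
  then show ?thesis using f0 M by (simp add: mult.commute)
qed

lemma power_add_power_le:
  fixes x y :: real
  assumes "0 \<le> x" "0 \<le> y" "n > 0"
  shows "x ^ n + y ^ n \<le> (x + y) ^ n"
  using assms(3)
proof (induction n rule: nat_induct_non_zero)
  case (Suc n)
  have "x ^ Suc n + y ^ Suc n \<le> (x ^ n + y ^ n) * (x + y)"
    using assms by (simp add: algebra_simps)
  also have "\<dots> \<le> (x + y) ^ n * (x + y)" using Suc.IH assms by (intro mult_right_mono) auto
  finally show ?case by (simp add: mult.commute)
qed simp

lemma root_add_le: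
  assumes "0 < n" "0 \<le> a" "0 \<le> b"
  shows "root n (a + b) \<le> root n a + root n b"
proof -
  have "a + b = root n a ^ n + root n b ^ n" using assms by (simp add: real_root_pow_pos2)
  also have "\<dots> \<le> (root n a + root n b) ^ n" using assms by (intro power_add_power_le) auto
  finally show ?thesis
    using assms real_root_le_iff[OF \<open>0 < n\<close>] real_root_power_cancel by (metis add_nonneg_nonneg real_root_ge_zero)
qed

lemma root_two_pow_half:
  assumes "0 < n"
  shows "root n (2 ^ n / 2) = 2 powr (1 - 1 / real n)"
proof -
  have "root n (2 ^ n / 2) = (2 powr (real n - 1)) powr (1 / real n)"
    using assms by (simp add: root_powr_inverse powr_diff powr_realpow)
  also have "\<dots> = 2 powr (1 - 1 / real n)"
    using assms by (simp add: powr_powr field_simps)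
  finally show ?thesis .
qed

lemma powr_inverse_le_of_bounds:
  fixes L X a b c :: real
  assumes n: "0 < n" and L: "0 \<le> L" "L \<le> c ^ n * X" and X: "X \<le> 2 ^ n / 2 * (a + b)"
    and "0 \<le> a" "0 \<le> b" "0 \<le> c"
  shows "L powr (1 / real n) \<le> 2 powr (1 - 1 / real n) * c * (a powr (1 / real n) + b powr (1 / real n))"
proof -
  have "L \<le> c ^ n * (2 ^ n / 2) * (a + b)"
    using L X assms by (metis mult.assoc order_trans mult_left_mono zero_le_power)
  then have "root n L \<le> root n (c ^ n) * root n (2 ^ n / 2) * root n (a + b)"
    using n by (simp only: real_root_le_mono flip: real_root_mult)
  also have "\<dots> = c * 2 powr (1 - 1 / real n) * root n (a + b)"
    using assms by (simp add: real_root_power_cancel root_two_pow_half)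
  also have "\<dots> \<le> c * 2 powr (1 - 1 / real n) * (root n a + root n b)"
    using assms by (intro mult_left_mono root_add_le) auto
  finally show ?thesis
    using assms by (simp add: root_powr_inverse mult_ac)
qed

section \<open>Determinant inequalities\<close>

lemma Re_det_posdef_pos:
  assumes "posdef n Q"
  shows "0 < Re (det Q)"
proof -
  obtain S S' where S: "S \<in> carrier_mat n n" and S': "S' \<in> carrier_mat n n" and SS': "S * S' = 1\<^sub>m n"
    and QS: "Q = S * ctrans S"
    using posdef_factor[OF assms] by blast
  have "det S * det S' = 1" using det_mult[OF S S'] SS' by simp
  then have "det S \<noteq> 0" by auto
  moreover have "det Q = complex_of_real ((cmod (det S))\<^sup>2)"
    using det_congruence[OF S one_carrier_mat] QS S by (simp add: right_mult_one_mat)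
  ultimately show ?thesis by simp
qed

lemma Re_det_psd_le_posdef:
  assumes "posdef n Q" "psd n P" "psd n (Q - P)"
  shows "0 \<le> Re (det P)" "Re (det P) \<le> Re (det Q)"
proof -
  obtain T t where T: "T \<in> carrier_mat n n" and Q: "Q = T * ctrans T" and P: "P = T * rdiag n t * ctrans T"
    and t: "\<forall>i<n. 0 \<le> t i \<and> t i \<le> 1"
    using psd_le_posdef_congruent_rdiag[OF assms] by blast
  have "Re (det P) = (cmod (det T))\<^sup>2 * (\<Prod>i<n. t i)"
    unfolding P det_congruence[OF T diag_of_carrier] det_diag_of by (simp flip: of_real_prod)
  moreover have "Re (det Q) = (cmod (det T))\<^sup>2"
    using det_congruence[OF T one_carrier_mat] Q T by (simp add: right_mult_one_mat)
  moreover have "0 \<le> (\<Prod>i<n. t i)" "(\<Prod>i<n. t i) \<le> 1"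
    using t by (auto intro: prod_nonneg prod_le_1)
  ultimately show "0 \<le> Re (det P)" "Re (det P) \<le> Re (det Q)"
    by (simp_all add: mult_left_le)
qed

lemma Re_det_add_psd_le_posdef:
  assumes "posdef n Q" "psd n P" "psd n (Q - P)"
  shows "Re (det (Q + P)) \<le> 2 ^ n / 2 * (Re (det Q) + Re (det P))"
proof -
  obtain T t where T: "T \<in> carrier_mat n n" and Q: "Q = T * ctrans T" and P: "P = T * rdiag n t * ctrans T"
    and t: "\<forall>i<n. 0 \<le> t i \<and> t i \<le> 1"
    using psd_le_posdef_congruent_rdiag[OF assms] by blast
  define s where "s = (cmod (det T))\<^sup>2"
  have Q1: "Q = T * rdiag n (\<lambda>_. 1) * ctrans T" using Q T by (simp add: diag_of_one right_mult_one_mat)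
  have "Re (det (T * rdiag n r * ctrans T)) = s * (\<Prod>i<n. r i)" for r
    unfolding det_congruence[OF T diag_of_carrier] det_diag_of s_def by (simp flip: of_real_prod)
  from this[of "\<lambda>_. 1"] this[of t] this[of "\<lambda>i. 1 + t i"]
  have "Re (det Q) = s" "Re (det P) = s * (\<Prod>i<n. t i)" "Re (det (Q + P)) = s * (\<Prod>i<n. 1 + t i)"
    unfolding Q1 P congruence_add[OF T diag_of_carrier diag_of_carrier] rdiag_add by simp_all
  moreover have "s * (\<Prod>i<n. 1 + t i) \<le> s * (2 ^ n / 2 * (1 + (\<Prod>i<n. t i)))"
    using prod_one_plus_le[OF t] unfolding s_def by (intro mult_left_mono) auto
  ultimately show ?thesis by (simp add: algebra_simps)
qed

lemma det_add_le_of_loewner_bounds: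
  assumes n: "n > 0" and A: "posdef n A" and B: "posdef n B" and c: "0 \<le> c"
    and F: "psd n F" "psd n (complex_of_real c \<cdot>\<^sub>m A - F)"
    and G: "psd n G" "psd n (complex_of_real c \<cdot>\<^sub>m B - G)"
  shows "0 \<le> Re (det (F + G))" "Re (det (F + G)) \<le> c ^ n * Re (det (A + B))"
proof -
  have Ac: "A \<in> carrier_mat n n" and Bc: "B \<in> carrier_mat n n"
    using A B unfolding posdef_def hermitian_def by auto
  have Fc: "F \<in> carrier_mat n n" and Gc: "G \<in> carrier_mat n n"
    using F G unfolding psd_def hermitian_def by auto
  show "0 \<le> Re (det (F + G))" "Re (det (F + G)) \<le> c ^ n * Re (det (A + B))"
  proof (atomize(full), cases "c = 0")
    case True
    then have "complex_of_real c \<cdot>\<^sub>m A = 0\<^sub>m n n" "complex_of_real c \<cdot>\<^sub>m B = 0\<^sub>m n n"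
      using Ac Bc by (auto intro!: eq_matI)
    then have "F = 0\<^sub>m n n" "G = 0\<^sub>m n n" using F G psd_antisym_zero by auto
    then show "0 \<le> Re (det (F + G)) \<and> Re (det (F + G)) \<le> c ^ n * Re (det (A + B))"
      using True n by (simp add: zero_power)
  next
    case False
    define Q where "Q = complex_of_real c \<cdot>\<^sub>m (A + B)"
    have "posdef n Q"
      using A B c False Ac Bc unfolding posdef_def Q_def
      by (auto simp: hermitian_smult_real hermitian_add Re_qform_smult_real[of _ n] Re_qform_add[of _ n]
          intro!: mult_pos_pos add_pos_pos)
    moreover have "Q - (F + G) = (complex_of_real c \<cdot>\<^sub>m A - F) + (complex_of_real c \<cdot>\<^sub>m B - G)"
      unfolding Q_def using Ac Bc Fc Gc by (intro eq_matI) (auto simp: algebra_simps)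
    ultimately have "0 \<le> Re (det (F + G)) \<and> Re (det (F + G)) \<le> Re (det Q)"
      using Re_det_psd_le_posdef[of n Q "F + G"] psd_add F G by simp
    moreover have "Re (det Q) = c ^ n * Re (det (A + B))"
      unfolding Q_def using Ac Bc by (simp add: det_smult flip: of_real_power)
    ultimately show "0 \<le> Re (det (F + G)) \<and> Re (det (F + G)) \<le> c ^ n * Re (det (A + B))"
      by simp
  qed
qed

theorem theorem3p3:
  fixes n :: nat and m M :: real and A B :: "complex mat" and f :: "real \<Rightarrow> real"
  assumes "n > 0"
    and "0 < m" and "m < M"
    and "posdef n A" and "posdef n B"
    and "loewner_le n (complex_of_real m \<cdot>\<^sub>m 1\<^sub>m n) A" and "loewner_le n A (complex_of_real M \<cdot>\<^sub>m 1\<^sub>m n)"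
    and "loewner_le n (complex_of_real m \<cdot>\<^sub>m 1\<^sub>m n) B" and "loewner_le n B (complex_of_real M \<cdot>\<^sub>m 1\<^sub>m n)"
    and "\<forall>x\<ge>0. f x \<ge> 0"
    and "f differentiable_on {0..}"
    and "convex_on {0..} f"
    and "f 0 = 0"
    and "(\<forall>k. eigenvalue B k \<longrightarrow> Re k < lambda_min A) \<or>
         (\<forall>k. eigenvalue B k \<longrightarrow> lambda_max A < Re k)"
  shows "(Re (det (mat_fun n f A + mat_fun n f B))) powr (1 / real n)
          \<le> 2 powr (1 - 1 / real n) * (f M / M) *
             ((Re (det A)) powr (1 / real n) + (Re (det B)) powr (1 / real n))"
proof -
  note n = assms(1) and A = assms(4) and B = assms(5) and f_nonneg = assms(10)
  have hA: "hermitian n A" and hB: "hermitian n B" using A B unfolding posdef_def by auto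
  have M: "0 < M" using assms(2,3) by simp
  have c: "0 \<le> f M / M" using f_nonneg M by simp
  have f_bound: "0 \<le> f t \<and> f t \<le> f M / M * t" if "m \<le> t" "t \<le> M" for t
    using that f_nonneg convex_on_le_chord_origin[OF assms(12,13) M] assms(2) by simp
  note FA = mat_fun_loewner_bounds[OF hA assms(6,7) f_bound]
  note FB = mat_fun_loewner_bounds[OF hB assms(8,9) f_bound]
  note lhs = det_add_le_of_loewner_bounds[OF n A B c FA FB]
  have "Re (det (A + B)) \<le> 2 ^ n / 2 * (Re (det A) + Re (det B))"
    using psd_minus_of_separated_eigenvalues[OF hA hB assms(14)]
  proof
    assume "psd n (B - A)"
    from Re_det_add_psd_le_posdef[OF B posdef_psd[OF A] this]
    show ?thesis
      unfolding comm_add_mat[OF hermitian_carrier[OF hB] hermitian_carrier[OF hA]] by (simp add: add.commute)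
  qed (rule Re_det_add_psd_le_posdef[OF A posdef_psd[OF B]])
  then show ?thesis
    using powr_inverse_le_of_bounds[OF n lhs] Re_det_posdef_pos[OF A] Re_det_posdef_pos[OF B] c
    by simp
qed

end
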